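(* Consider $\mathsf{SGDsub}$ run for $T$ steps with batch parameter $B$. Suppose $B\ge\frac{100\log(T/\delta)}{\epsilon}$, $\epsilon\le c_0$ for a suitable absolute constant $c_0>0$, and $\upsilon=0.9B+\frac{2\log(T/\delta)}{\epsilon}$. Suppose that for every point $Y\in\mathbb{R}^d$, $|\{i\in[B]:q_1(Z_{i,1})\in B_\infty(Y,1/\tau)\}|<B/3$. Then with probability at least $1-\delta/(T e^{\epsilon})$, the AboveThreshold procedure returns $a_1=\bot$.
   Context: $\mathsf{SGDsub}$: users are split into groups $\{Z_{i,t}\}_{t\in[T]}$, $i\in[B]$, each user a set of $m$ data points; with iterates $x_t$, $q_t(Z_{i,t})=\frac1m\sum_{z\in Z_{i,t}}\nabla f(x_{t-1};z)$. Concentration scores $s_t=\frac1B\sum_{i,j\in[B]}\exp(-\tau\|q_t(Z_{i,t})-q_t(Z_{j,t})\|_\infty)$. AboveThreshold with privacy $\epsilon/2$ and threshold $\upsilon$: draw $\hat\upsilon=\upsilon-\mathrm{Lap}(4/\epsilon)$; for $t=1,\dots,T$ draw $\nu_t\sim\mathrm{Lap}(8/\epsilon)$; if $s_t+\nu_t<\hat\upsilon$ output $a_t=\bot$ and halt, else output $a_t=\top$. $\mathrm{Lap}(b)$ is the Laplace distribution of scale $b$. *)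

theory Defs
  imports "HOL-Probability.Probability"
begin

text \<open>Vectors in R^d are represented as functions nat => real; only the
  coordinates 0..d-1 are relevant.\<close>

definition linf_norm :: "nat \<Rightarrow> (nat \<Rightarrow> real) \<Rightarrow> real" where
  "linf_norm d x = (if d = 0 then 0 else Max ((\<lambda>k. \<bar>x k\<bar>) ` {..<d}))"

definition linf_ball :: "nat \<Rightarrow> (nat \<Rightarrow> real) \<Rightarrow> real \<Rightarrow> (nat \<Rightarrow> real) set" where
  "linf_ball d Y r = {x. linf_norm d (x - Y) < r}"

definition sgd_q :: "((nat \<Rightarrow> real) \<Rightarrow> 'z \<Rightarrow> (nat \<Rightarrow> real)) \<Rightarrow> nat \<Rightarrow> (nat \<Rightarrow> real) \<Rightarrow> 'z multiset \<Rightarrow> (nat \<Rightarrow> real)" where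
  "sgd_q gradf m x Zit = (\<lambda>k. sum_mset (image_mset (\<lambda>z. gradf x z k) Zit) / real m)"

definition conc_score :: "nat \<Rightarrow> real \<Rightarrow> nat \<Rightarrow> (nat \<Rightarrow> (nat \<Rightarrow> real)) \<Rightarrow> real" where
  "conc_score d \<tau> B qs =
     (\<Sum>i\<in>{1..B}. \<Sum>j\<in>{1..B}. exp (- \<tau> * linf_norm d (qs i - qs j))) / real B"

definition laplace_density :: "real \<Rightarrow> real \<Rightarrow> real" where
  "laplace_density b x = exp (- \<bar>x\<bar> / b) / (2 * b)"

definition laplace :: "real \<Rightarrow> real measure" where
  "laplace b = density lborel (\<lambda>x. ennreal (laplace_density b x))"

datatype at_answer = Top | Bot

text \<open>First answer a_1 of AboveThreshold, given the score s_1, the threshold upsilon,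
  the threshold noise L (so that hat upsilon = upsilon - L) and the query noise nu_1.\<close>
definition above_threshold_a1 :: "real \<Rightarrow> real \<Rightarrow> real \<Rightarrow> real \<Rightarrow> at_answer" where
  "above_threshold_a1 s1 \<upsilon> L \<nu>1 = (if s1 + \<nu>1 < \<upsilon> - L then Bot else Top)"

end

theory Submission
  imports Defs "HOL-Real_Asymp.Real_Asymp"
begin

text \<open>If every l-infinity ball of radius 1/\<tau> holds fewer than B/3 of the averaged
  gradients, then in every row of the concentration score more than 2B/3 of the terms
  are at most e^-1 \<le> 1/2, so s_1 \<le> 2B/3.  With the chosen threshold the margin
  \<upsilon> - s_1 is then at least 0.2 B + 2 log(T/\<delta>)/\<epsilon> \<ge> 22 log(T/\<delta>)/\<epsilon>.  The
  answer is \<top> only if the threshold noise or the query noise exceeds half of that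
  margin, and the exponential tails of the two Laplace laws make this unlikely.\<close>

lemma laplace_density_measurable [measurable]: "laplace_density b \<in> borel_measurable borel"
  unfolding laplace_density_def by measurable

lemma nn_integral_laplace_density_atLeast:
  assumes b: "b > 0" and c: "c \<ge> 0"
  shows "(\<integral>\<^sup>+x. ennreal (laplace_density b x) * indicator {c..} x \<partial>lborel) = ennreal (exp (-c/b) / 2)"
proof -
  have "(\<integral>\<^sup>+x. ennreal (laplace_density b x) * indicator {c..} x \<partial>lborel)
      = (\<integral>\<^sup>+x. ennreal (exp (-x/b) / (2*b)) * indicator {c..} x \<partial>lborel)"
    using c by (intro nn_integral_cong) (auto simp: laplace_density_def indicator_def)
  also have "\<dots> = 0 - (- exp (-c/b) / 2)"
  proof (rule nn_integral_FTC_atLeast)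
    show "(\<lambda>x. exp (-x/b) / (2*b)) \<in> borel_measurable borel" by measurable
    fix x
    show "((\<lambda>x. - exp (-x/b) / 2) has_real_derivative exp (-x/b) / (2*b)) (at x)"
      using b by (auto intro!: derivative_eq_intros simp: field_simps)
    show "0 \<le> exp (-x/b) / (2*b)" using b by simp
  next
    show "((\<lambda>x. - exp (-x/b) / 2) \<longlongrightarrow> 0) at_top"
      using b by real_asymp
  qed
  finally show ?thesis by simp
qed

lemma nn_integral_laplace_density:
  assumes b: "b > 0"
  shows "(\<integral>\<^sup>+x. ennreal (laplace_density b x) \<partial>lborel) = 1"
proof -
  let ?g = "\<lambda>x. ennreal (laplace_density b x)"
  have split: "(\<integral>\<^sup>+x. ?g x \<partial>lborel)
      = (\<integral>\<^sup>+x. ?g x * indicator {0..} x \<partial>lborel) + (\<integral>\<^sup>+x. ?g x * indicator {..<0} x \<partial>lborel)"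
    by (subst nn_integral_add[symmetric]) (auto intro!: nn_integral_cong simp: indicator_def)
  have "(\<integral>\<^sup>+x. ?g x * indicator {..<0} x \<partial>lborel)
      = ennreal \<bar>-1\<bar> * (\<integral>\<^sup>+x. ?g (0 + (-1) * x) * indicator {..<0} (0 + (-1) * x) \<partial>lborel)"
    by (rule nn_integral_real_affine) auto
  also have "\<dots> = (\<integral>\<^sup>+x. ?g x * indicator {0..} x \<partial>lborel)"
    using AE_lborel_singleton[of "0::real"]
    by (auto intro!: nn_integral_cong_AE elim!: eventually_mono simp: laplace_density_def indicator_def)
  finally have "(\<integral>\<^sup>+x. ?g x \<partial>lborel) = ennreal (1/2) + ennreal (1/2)"
    unfolding split using nn_integral_laplace_density_atLeast[OF b, of 0] by simp
  also have "\<dots> = 1"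
    by (simp add: ennreal_plus[symmetric] del: ennreal_plus ennreal_half)
  finally show ?thesis .
qed

lemma prob_space_laplace: "b > 0 \<Longrightarrow> prob_space (laplace b)"
  unfolding laplace_def
  by (rule prob_spaceI) (simp add: emeasure_density nn_integral_laplace_density)

lemma sets_laplace [simp, measurable_cong]: "sets (laplace b) = sets borel"
  unfolding laplace_def by simp

lemma space_laplace [simp]: "space (laplace b) = UNIV"
  unfolding laplace_def by simp

lemma measure_laplace_lessThan:
  assumes b: "b > 0" and c: "c \<ge> 0"
  shows "measure (laplace b) {..<c} = 1 - exp (-c/b) / 2"
proof -
  interpret prob_space "laplace b" using prob_space_laplace[OF b] .
  have "emeasure (laplace b) {c..} = ennreal (exp (-c/b) / 2)"
    unfolding laplace_def using nn_integral_laplace_density_atLeast[OF b c]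
    by (subst emeasure_density) auto
  then have "measure (laplace b) {c..} = exp (-c/b) / 2"
    by (simp add: measure_def)
  moreover have "{..<c} = space (laplace b) - {c..}" by auto
  ultimately show ?thesis using prob_compl[of "{c..}"] by simp
qed

lemma measure_laplace_pair_sum_lessThan:
  assumes b1: "b1 > 0" and b2: "b2 > 0" and t: "t \<ge> 0"
  shows "measure (laplace b1 \<Otimes>\<^sub>M laplace b2) {(L, \<nu>). L + \<nu> < t}
         \<ge> (1 - exp (-(t/2)/b1) / 2) * (1 - exp (-(t/2)/b2) / 2)"
proof -
  interpret M1: prob_space "laplace b1" using prob_space_laplace[OF b1] .
  interpret M2: prob_space "laplace b2" using prob_space_laplace[OF b2] .
  interpret P: pair_prob_space "laplace b1" "laplace b2" ..
  have "{(L, \<nu>). L + \<nu> < t} = {p \<in> space (laplace b1 \<Otimes>\<^sub>M laplace b2). fst p + snd p < t}"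
    by (auto simp: space_pair_measure)
  also have "\<dots> \<in> sets (laplace b1 \<Otimes>\<^sub>M laplace b2)" by measurable
  finally have meas: "{(L, \<nu>). L + \<nu> < t} \<in> sets (laplace b1 \<Otimes>\<^sub>M laplace b2)" .
  have "(1 - exp (-(t/2)/b1) / 2) * (1 - exp (-(t/2)/b2) / 2)
        = measure (laplace b1) {..<t/2} * measure (laplace b2) {..<t/2}"
    using t by (simp add: measure_laplace_lessThan b1 b2)
  also have "\<dots> = measure (laplace b1 \<Otimes>\<^sub>M laplace b2) ({..<t/2} \<times> {..<t/2})"
    by (simp add: measure_def M2.emeasure_pair_measure_Times enn2real_mult)
  also have "\<dots> \<le> measure (laplace b1 \<Otimes>\<^sub>M laplace b2) {(L, \<nu>). L + \<nu> < t}"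
    by (rule P.finite_measure_mono[OF _ meas]) auto
  finally show ?thesis .
qed

lemma linf_norm_nonneg: "linf_norm d x \<ge> 0"
  unfolding linf_norm_def
  by (auto intro!: order.trans[OF _ Max_ge[of _ "\<bar>x 0\<bar>"]])

lemma linf_norm_minus_commute: "linf_norm d (x - y) = linf_norm d (y - x)"
  unfolding linf_norm_def by (simp add: abs_minus_commute)

lemma exp_minus_one_le_half: "exp (-1::real) \<le> 1/2"
proof -
  have "2 \<le> exp (1::real)" using exp_ge_add_one_self[of 1] by simp
  then show ?thesis by (simp add: exp_minus field_simps)
qed

lemma conc_score_row_le:
  assumes \<tau>: "\<tau> > 0"
  shows "(\<Sum>j\<in>{1..B}. exp (- \<tau> * linf_norm d (qs i - qs j)))
           \<le> (real B + real (card {j\<in>{1..B}. qs j \<in> linf_ball d (qs i) (1/\<tau>)})) / 2"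
proof -
  define C where "C = {j\<in>{1..B}. qs j \<in> linf_ball d (qs i) (1/\<tau>)}"
  have term_le: "exp (- \<tau> * linf_norm d (qs i - qs j)) \<le> 1/2 + indicator C j / 2"
    if j: "j \<in> {1..B}" for j
  proof (cases "j \<in> C")
    case True
    have "0 \<le> \<tau> * linf_norm d (qs i - qs j)" using \<tau> linf_norm_nonneg by simp
    then show ?thesis using True by simp
  next
    case False
    then have "1/\<tau> \<le> linf_norm d (qs i - qs j)" using j unfolding C_def linf_ball_def
      by (auto simp: linf_norm_minus_commute[of d "qs i"])
    then have "1 \<le> \<tau> * linf_norm d (qs i - qs j)" using \<tau> by (simp add: field_simps)
    then have "exp (- \<tau> * linf_norm d (qs i - qs j)) \<le> exp (-1)" by simp
    moreover have "indicator C j = (0::real)" using False by simp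
    ultimately show ?thesis using exp_minus_one_le_half by linarith
  qed
  have "{1..B} \<inter> C = C" unfolding C_def by auto
  have "(\<Sum>j\<in>{1..B}. indicator C j :: real) = (\<Sum>j\<in>{1..B} \<inter> C. 1)"
    by (simp add: sum.inter_restrict indicator_def)
  then have card_C: "(\<Sum>j\<in>{1..B}. indicator C j :: real) = real (card C)"
    unfolding \<open>{1..B} \<inter> C = C\<close> by simp
  have "(\<Sum>j\<in>{1..B}. exp (- \<tau> * linf_norm d (qs i - qs j))) \<le> (\<Sum>j\<in>{1..B}. 1/2 + indicator C j / 2)"
    by (rule sum_mono) (rule term_le)
  also have "\<dots> = real B / 2 + (\<Sum>j\<in>{1..B}. indicator C j) / 2"
    by (simp add: sum.distrib sum_divide_distrib[symmetric])
  also have "\<dots> = (real B + real (card C)) / 2"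
    by (simp only: card_C add_divide_distrib)
  finally show ?thesis unfolding C_def .
qed

lemma conc_score_le:
  assumes \<tau>: "\<tau> > 0"
    and balls: "\<forall>Y. real (card {i\<in>{1..B}. qs i \<in> linf_ball d Y (1/\<tau>)}) \<le> k"
  shows "conc_score d \<tau> B qs \<le> (real B + k) / 2"
proof (cases "B = 0")
  case True
  then show ?thesis using balls by (simp add: conc_score_def)
next
  case False
  have "(\<Sum>j\<in>{1..B}. exp (- \<tau> * linf_norm d (qs i - qs j))) \<le> (real B + k) / 2" for i
    using balls by (intro order_trans[OF conc_score_row_le[OF \<tau>]] divide_right_mono add_left_mono) auto
  then have "(\<Sum>i\<in>{1..B}. \<Sum>j\<in>{1..B}. exp (- \<tau> * linf_norm d (qs i - qs j))) \<le> (\<Sum>i\<in>{1..B}. (real B + k) / 2)"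
    by (intro sum_mono)
  then show ?thesis using False by (simp add: conc_score_def field_simps)
qed

lemma threshold_margin:
  fixes a \<epsilon> s B :: real
  assumes \<epsilon>: "0 < \<epsilon>" and "0 \<le> B" and B: "100 * a \<le> \<epsilon> * B" and s: "s \<le> 2 * B / 3"
  shows "22 * a \<le> \<epsilon> * (0.9 * B + 2 * a / \<epsilon> - s)"
proof -
  have "\<epsilon> * (0.9 * B + 2 * a / \<epsilon> - s) = \<epsilon> * (0.9 * B - s) + 2 * a"
    using \<epsilon> by (simp add: field_simps)
  moreover have "\<epsilon> * (0.2 * B) \<le> \<epsilon> * (0.9 * B - s)"
    using \<epsilon> s \<open>0 \<le> B\<close> by (intro mult_left_mono) auto
  ultimately show ?thesis using B by linarith
qed

text \<open>Arithmetic core of the tail estimate, with a = log(T/\<delta>) and t the margin \<upsilon> - s_1.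
  If a is not small compared with \<epsilon>, both tails are below e^-(a+\<epsilon>); otherwise
  1 - e^-(a+\<epsilon>) \<le> a + \<epsilon> \<le> 1/4, which the trivial bound t \<ge> 0 already gives.\<close>

lemma laplace_tail_product_ge:
  fixes a \<epsilon> t :: real
  assumes \<epsilon>: "0 < \<epsilon>" "\<epsilon> \<le> 1/100" and a: "0 < a" and margin: "22 * a \<le> \<epsilon> * t"
  shows "1 - exp (-(a + \<epsilon>)) \<le> (1 - exp (-(\<epsilon>*t/8)) / 2) * (1 - exp (-(\<epsilon>*t/16)) / 2)"
proof -
  define p where "p = exp (-(\<epsilon>*t/16))"
  have "0 \<le> \<epsilon> * t" using a margin by linarith
  then have p: "0 < p" "p \<le> 1" "exp (-(\<epsilon>*t/8)) \<le> p" unfolding p_def by auto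
  then have "(1 - p/2) * (1 - p/2) \<le> (1 - exp (-(\<epsilon>*t/8)) / 2) * (1 - p/2)"
    by (intro mult_right_mono) auto
  moreover have "1 - p \<le> (1 - p/2) * (1 - p/2)" by (simp add: algebra_simps)
  moreover have "1/2 \<le> 1 - p/2" using p by simp
  then have "1/4 \<le> (1 - p/2) * (1 - p/2)" using mult_mono[of "1/2" "1 - p/2" "1/2" "1 - p/2"] by simp
  moreover have "1 - exp (-(a + \<epsilon>)) \<le> max (1 - p) (1/4)"
  proof (cases "a \<ge> 8 * \<epsilon> / 3")
    case True
    then have "p \<le> exp (-(a + \<epsilon>))" unfolding p_def using margin by simp
    then show ?thesis by simp
  next
    case False
    then have "1 - exp (-(a + \<epsilon>)) \<le> 1/4"
      using \<epsilon> exp_ge_add_one_self[of "-(a + \<epsilon>)"] by linarith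
    then show ?thesis by (simp add: le_max_iff_disj)
  qed
  ultimately show ?thesis unfolding p_def by linarith
qed

theorem lemma3p8:
  shows "\<exists>c0 > (0::real). \<forall>(d::nat) (T::nat) (B::nat) (m::nat) (\<delta>::real) (\<epsilon>::real) (\<tau>::real)
           (\<upsilon>::real) (x0 :: nat \<Rightarrow> real) (Z :: nat \<Rightarrow> nat \<Rightarrow> 'z multiset)
           (gradf :: (nat \<Rightarrow> real) \<Rightarrow> 'z \<Rightarrow> (nat \<Rightarrow> real)).
     d \<ge> 1 \<and> T \<ge> 1 \<and> 0 < \<delta> \<and> \<delta> < 1 \<and> 0 < \<epsilon> \<and> \<epsilon> \<le> c0 \<and> 0 < \<tau> \<and> m \<ge> 1
     \<and> (\<forall>i\<in>{1..B}. size (Z i 1) = m)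
     \<and> real B \<ge> 100 * ln (real T / \<delta>) / \<epsilon>
     \<and> \<upsilon> = 0.9 * real B + 2 * ln (real T / \<delta>) / \<epsilon>
     \<and> (\<forall>Y. real (card {i\<in>{1..B}. sgd_q gradf m x0 (Z i 1) \<in> linf_ball d Y (1/\<tau>)}) < real B / 3)
     \<longrightarrow> measure (laplace (4/\<epsilon>) \<Otimes>\<^sub>M laplace (8/\<epsilon>))
           {(L, \<nu>). above_threshold_a1
                        (conc_score d \<tau> B (\<lambda>i. sgd_q gradf m x0 (Z i 1))) \<upsilon> L \<nu> = Bot}
         \<ge> 1 - \<delta> / (real T * exp \<epsilon>)"
proof (intro exI[of _ "1/100"] conjI allI impI)
  fix d T B m \<delta> \<epsilon> \<tau> \<upsilon> x0 gradf and Z :: "nat \<Rightarrow> nat \<Rightarrow> 'z multiset"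
  define s where "s = conc_score d \<tau> B (\<lambda>i. sgd_q gradf m x0 (Z i 1))"
  define a where "a = ln (real T / \<delta>)"
  assume "d \<ge> 1 \<and> T \<ge> 1 \<and> 0 < \<delta> \<and> \<delta> < 1 \<and> 0 < \<epsilon> \<and> \<epsilon> \<le> (1/100::real) \<and> 0 < \<tau> \<and> m \<ge> 1
     \<and> (\<forall>i\<in>{1..B}. size (Z i 1) = m)
     \<and> real B \<ge> 100 * ln (real T / \<delta>) / \<epsilon>
     \<and> \<upsilon> = 0.9 * real B + 2 * ln (real T / \<delta>) / \<epsilon>
     \<and> (\<forall>Y. real (card {i\<in>{1..B}. sgd_q gradf m x0 (Z i 1) \<in> linf_ball d Y (1/\<tau>)}) < real B / 3)"
  then have \<tau>: "0 < \<tau>" and \<epsilon>: "0 < \<epsilon>" "\<epsilon> \<le> 1/100"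
    and T: "1 \<le> T" and \<delta>: "0 < \<delta>" "\<delta> < 1" and B: "100 * a \<le> \<epsilon> * real B" and \<upsilon>: "\<upsilon> = 0.9 * real B + 2 * a / \<epsilon>"
    and balls: "\<forall>Y. real (card {i\<in>{1..B}. sgd_q gradf m x0 (Z i 1) \<in> linf_ball d Y (1/\<tau>)}) \<le> real B / 3"
    by (auto simp: a_def field_simps less_imp_le)
  have exp_a: "exp a = real T / \<delta>" and a: "0 < a"
    using T \<delta> by (simp_all add: a_def)
  have "s \<le> 2 * real B / 3"
    using conc_score_le[OF \<tau> balls] by (simp add: s_def)
  then have margin: "22 * a \<le> \<epsilon> * (\<upsilon> - s)"
    using threshold_margin[OF \<epsilon>(1) of_nat_0_le_iff B] \<upsilon> by simp
  then have "0 \<le> \<epsilon> * (\<upsilon> - s)" using a by linarith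
  then have "0 \<le> \<upsilon> - s" using \<epsilon> by (simp add: zero_le_mult_iff)
  have "\<delta> / (real T * exp \<epsilon>) = inverse (exp a * exp \<epsilon>)"
    using T \<delta> by (simp add: exp_a field_simps)
  also have "\<dots> = exp (-(a + \<epsilon>))"
    unfolding exp_minus exp_add ..
  also have "1 - exp (-(a + \<epsilon>)) \<le> (1 - exp (-((\<upsilon> - s)/2)/(4/\<epsilon>)) / 2) * (1 - exp (-((\<upsilon> - s)/2)/(8/\<epsilon>)) / 2)"
    using laplace_tail_product_ge[OF \<epsilon> a margin] by (simp add: field_simps)
  also have "\<dots> \<le> measure (laplace (4/\<epsilon>) \<Otimes>\<^sub>M laplace (8/\<epsilon>)) {(L, \<nu>). L + \<nu> < \<upsilon> - s}"
    using \<epsilon> \<open>0 \<le> \<upsilon> - s\<close> by (intro measure_laplace_pair_sum_lessThan) auto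
  finally show "measure (laplace (4/\<epsilon>) \<Otimes>\<^sub>M laplace (8/\<epsilon>))
           {(L, \<nu>). above_threshold_a1
                        (conc_score d \<tau> B (\<lambda>i. sgd_q gradf m x0 (Z i 1))) \<upsilon> L \<nu> = Bot}
         \<ge> 1 - \<delta> / (real T * exp \<epsilon>)"
    by (simp add: above_threshold_a1_def s_def algebra_simps)
qed simp

end
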